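(* Let $d\geq 2$, energies $E_1\leq\dots\leq E_d$, inverse temperatures $\alpha>\beta\geq 0$, and $\gamma_k=e^{-\alpha E_k}/\sum_i e^{-\alpha E_i}$, $\Gamma_k=e^{-\beta E_k}/\sum_i e^{-\beta E_i}$. Define the probability vectors $\tilde{\boldsymbol{\gamma}}$ and $\tilde{\boldsymbol{\Gamma}}$ by $$\tilde{\gamma}_1=\frac{\Gamma_1(\gamma_1-\gamma_d)}{\Gamma_1(1-\gamma_d)-\Gamma_d(1-\gamma_1)},\quad \tilde{\gamma}_k=\frac{1-\tilde{\gamma}_1}{1-\gamma_1}\gamma_k\ (k\neq 1),$$ $$\tilde{\Gamma}_d=\frac{\Gamma_d(\gamma_1-\gamma_d)}{\Gamma_1(1-\gamma_d)-\Gamma_d(1-\gamma_1)},\quad \tilde{\Gamma}_k=\frac{1-\tilde{\Gamma}_d}{1-\Gamma_d}\Gamma_k\ (k\neq d).$$ Then $\tilde{\boldsymbol{\gamma}}\in F_{AB}$ and $\tilde{\boldsymbol{\Gamma}}\in F_{AB}$. Moreover, the convergence to these states with the number of strokes $N$ is exponential: there exist states in $F^{(N)}_{AB}$ whose distance to $\tilde{\boldsymbol{\gamma}}$ (respectively $\tilde{\boldsymbol{\Gamma}}$) decays exponentially in $N$.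
   Context: Incoherent states are probability vectors in $\mathbb{R}^d$. For a full-support probability vector $\mathbf{g}$, $\mathbf{p}\succ_{\mathbf{g}}\mathbf{q}$ (thermomajorisation) means: ordering indices by a permutation $\pi$ with $p_{\pi_i}/g_{\pi_i}$ non-increasing in $i$, the piecewise linear curve through $\left(\sum_{i\leq j}g_{\pi_i},\sum_{i\leq j}p_{\pi_i}\right)$, $j=0,\dots,d$, is nowhere below the analogous curve of $\mathbf{q}$. For $N\geq 1$, $F^{(N)}_{AB}$ (states achievable after $N$ strokes) is the set of convex combinations of vectors $\mathbf{p}^{(N-1)}$ obtainable by a chain $\boldsymbol{\gamma}=\mathbf{p}^{(0)}\succ_{\boldsymbol{\Gamma}}\mathbf{p}^{(1)}\succ_{\boldsymbol{\gamma}}\mathbf{p}^{(2)}\succ_{\boldsymbol{\Gamma}}\cdots\mathbf{p}^{(N-1)}$ or by a chain $\boldsymbol{\Gamma}=\mathbf{p}^{(0)}\succ_{\boldsymbol{\gamma}}\mathbf{p}^{(1)}\succ_{\boldsymbol{\Gamma}}\cdots\mathbf{p}^{(N-1)}$. $F_{AB}$ is the set of states achievable as $N\to\infty$, i.e., the closure of $\bigcup_N F^{(N)}_{AB}$. *)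

theory Defs
  imports "HOL-Combinatorics.Permutations" Complex_Main
begin

text \<open>States on a d-level system are represented as functions nat \<Rightarrow> real,
  where index i < d corresponds to the paper's index i+1 and the function
  vanishes for i \<ge> d.\<close>

definition prob_vec :: "nat \<Rightarrow> (nat \<Rightarrow> real) \<Rightarrow> bool" where
  "prob_vec d p \<longleftrightarrow> (\<forall>i<d. 0 \<le> p i) \<and> (\<forall>i\<ge>d. p i = 0) \<and> (\<Sum>i<d. p i) = 1"

definition full_support :: "nat \<Rightarrow> (nat \<Rightarrow> real) \<Rightarrow> bool" where
  "full_support d g \<longleftrightarrow> prob_vec d g \<and> (\<forall>i<d. 0 < g i)"

definition thermo_order :: "nat \<Rightarrow> (nat \<Rightarrow> real) \<Rightarrow> (nat \<Rightarrow> real) \<Rightarrow> (nat \<Rightarrow> nat) \<Rightarrow> bool" where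
  "thermo_order d g p \<pi> \<longleftrightarrow> \<pi> permutes {..<d} \<and>
     (\<forall>i j. i \<le> j \<longrightarrow> j < d \<longrightarrow> p (\<pi> j) / g (\<pi> j) \<le> p (\<pi> i) / g (\<pi> i))"

definition cumg :: "(nat \<Rightarrow> real) \<Rightarrow> (nat \<Rightarrow> nat) \<Rightarrow> nat \<Rightarrow> real" where
  "cumg g \<pi> j = (\<Sum>i<j. g (\<pi> i))"

text \<open>The piecewise linear curve through the points
  (sum_{i<j} g_{pi i}, sum_{i<j} p_{pi i}), j = 0..d, evaluated at x in [0,1]:
  on the i-th segment [cumg i, cumg (i+1)] of length g_{pi i} it has slope
  p_{pi i}/g_{pi i}, so its value is the sum of slope times the length of the
  part of each segment lying to the left of x.\<close>
definition thermo_curve :: "nat \<Rightarrow> (nat \<Rightarrow> real) \<Rightarrow> (nat \<Rightarrow> real) \<Rightarrow> (nat \<Rightarrow> nat) \<Rightarrow> real \<Rightarrow> real" where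
  "thermo_curve d g p \<pi> x =
     (\<Sum>i<d. (p (\<pi> i) / g (\<pi> i)) * max 0 (min (g (\<pi> i)) (x - cumg g \<pi> i)))"

definition thermomaj :: "nat \<Rightarrow> (nat \<Rightarrow> real) \<Rightarrow> (nat \<Rightarrow> real) \<Rightarrow> (nat \<Rightarrow> real) \<Rightarrow> bool" where
  "thermomaj d g p q \<longleftrightarrow> full_support d g \<and> prob_vec d p \<and> prob_vec d q \<and>
     (\<exists>\<pi>p \<pi>q. thermo_order d g p \<pi>p \<and> thermo_order d g q \<pi>q \<and>
        (\<forall>x\<in>{0..1}. thermo_curve d g q \<pi>q x \<le> thermo_curve d g p \<pi>p x))"

text \<open>End points p^(k) of chains a = p^(0) \<succ>_b p^(1) \<succ>_a p^(2) \<succ>_b ...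
  (step from p^(k) to p^(k+1) uses b for even k and a for odd k).\<close>
fun chain_ends :: "nat \<Rightarrow> (nat \<Rightarrow> real) \<Rightarrow> (nat \<Rightarrow> real) \<Rightarrow> nat \<Rightarrow> (nat \<Rightarrow> real) set" where
  "chain_ends d a b 0 = {a}"
| "chain_ends d a b (Suc k) =
     {q. \<exists>p\<in>chain_ends d a b k. thermomaj d (if even k then b else a) p q}"

definition convex_combs :: "(nat \<Rightarrow> real) set \<Rightarrow> (nat \<Rightarrow> real) set" where
  "convex_combs S = {q. \<exists>(m::nat) (ps :: nat \<Rightarrow> nat \<Rightarrow> real) (w :: nat \<Rightarrow> real).
      (\<forall>j<m. ps j \<in> S \<and> 0 \<le> w j) \<and> (\<Sum>j<m. w j) = 1 \<and>
      q = (\<lambda>i. \<Sum>j<m. w j * ps j i)}"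

text \<open>F^(N)_AB for N \<ge> 1 (gs = small gamma, Gs = capital Gamma).\<close>
definition F_N :: "nat \<Rightarrow> (nat \<Rightarrow> real) \<Rightarrow> (nat \<Rightarrow> real) \<Rightarrow> nat \<Rightarrow> (nat \<Rightarrow> real) set" where
  "F_N d gs Gs N = convex_combs (chain_ends d gs Gs (N - 1) \<union> chain_ends d Gs gs (N - 1))"

text \<open>Distance on states (l1 distance on the d coordinates; all norms on R^d are equivalent).\<close>
definition vdist :: "nat \<Rightarrow> (nat \<Rightarrow> real) \<Rightarrow> (nat \<Rightarrow> real) \<Rightarrow> real" where
  "vdist d p q = (\<Sum>i<d. \<bar>p i - q i\<bar>)"

definition F_AB :: "nat \<Rightarrow> (nat \<Rightarrow> real) \<Rightarrow> (nat \<Rightarrow> real) \<Rightarrow> (nat \<Rightarrow> real) set" where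
  "F_AB d gs Gs = {p. (\<forall>i\<ge>d. p i = 0) \<and>
      (\<forall>\<epsilon>>0. \<exists>N\<ge>1. \<exists>q\<in>F_N d gs Gs N. vdist d p q < \<epsilon>)}"

definition gibbs :: "nat \<Rightarrow> (nat \<Rightarrow> real) \<Rightarrow> real \<Rightarrow> nat \<Rightarrow> real" where
  "gibbs d E b k = (if k < d then exp (- b * E k) / (\<Sum>i<d. exp (- b * E i)) else 0)"

definition tilde_gamma :: "nat \<Rightarrow> (nat \<Rightarrow> real) \<Rightarrow> (nat \<Rightarrow> real) \<Rightarrow> nat \<Rightarrow> real" where
  "tilde_gamma d gs Gs k =
    (let t1 = Gs 0 * (gs 0 - gs (d-1)) / (Gs 0 * (1 - gs (d-1)) - Gs (d-1) * (1 - gs 0))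
     in if k = 0 then t1 else if k < d then (1 - t1) / (1 - gs 0) * gs k else 0)"

definition tilde_Gamma :: "nat \<Rightarrow> (nat \<Rightarrow> real) \<Rightarrow> (nat \<Rightarrow> real) \<Rightarrow> nat \<Rightarrow> real" where
  "tilde_Gamma d gs Gs k =
    (let td = Gs (d-1) * (gs 0 - gs (d-1)) / (Gs 0 * (1 - gs (d-1)) - Gs (d-1) * (1 - gs 0))
     in if k = d - 1 then td else if k < d then (1 - td) / (1 - Gs (d-1)) * Gs k else 0)"

end

theory Submission
  imports Defs "HOL-Analysis.Convex"
begin

(* The chains used here pass only through states of two kinds: gamma with its ground level
   re-weighted to t (after a stroke with the cold bath alpha) and Gamma with its top level
   re-weighted to T (after a stroke with the hot bath beta); the two target states are of
   these kinds as well.  Relative to its own Gibbs state such a state has just two distinct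
   slopes, so a stroke is verified by comparing the two supporting lines of the new curve
   with the concave curve of the old state at one elbow and at 1.  A hot stroke maps t to
   T = t Gamma_d / Gamma_1 and a cold stroke maps T to 1 - (1 - T)(1 - gamma_1)/(1 - gamma_d);
   both maps are affine, and their composite contracts with factor
   (1 - gamma_1)/(1 - gamma_d) * Gamma_d / Gamma_1 < 1 towards the fixed points that define
   the target states.  Hence the end points of the chains converge geometrically, with one
   factor per two strokes. *)

section \<open>Geometry of thermomajorisation curves\<close>

definition seg_overlap :: "(nat \<Rightarrow> real) \<Rightarrow> (nat \<Rightarrow> nat) \<Rightarrow> nat \<Rightarrow> real \<Rightarrow> real" where
  "seg_overlap g \<pi> i x = max 0 (min (g (\<pi> i)) (x - cumg g \<pi> i))"

definition thermo_slope :: "(nat \<Rightarrow> real) \<Rightarrow> (nat \<Rightarrow> real) \<Rightarrow> (nat \<Rightarrow> nat) \<Rightarrow> nat \<Rightarrow> real" where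
  "thermo_slope g p \<pi> i = p (\<pi> i) / g (\<pi> i)"

(* The line through the j-th segment of the curve: the curve is the minimum of these lines. *)
definition thermo_tangent ::
    "(nat \<Rightarrow> real) \<Rightarrow> (nat \<Rightarrow> real) \<Rightarrow> (nat \<Rightarrow> nat) \<Rightarrow> nat \<Rightarrow> real \<Rightarrow> real" where
  "thermo_tangent g p \<pi> j x = (\<Sum>i<j. p (\<pi> i)) + thermo_slope g p \<pi> j * (x - cumg g \<pi> j)"

lemma thermo_curve_eq_sum_overlap:
  "thermo_curve d g p \<pi> x = (\<Sum>i<d. thermo_slope g p \<pi> i * seg_overlap g \<pi> i x)"
  by (simp add: thermo_curve_def thermo_slope_def seg_overlap_def)

lemma full_support_permuted_pos:
  "full_support d g \<Longrightarrow> \<pi> permutes {..<d} \<Longrightarrow> i < d \<Longrightarrow> 0 < g (\<pi> i)"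
  using permutes_in_image[of \<pi> "{..<d}" i] by (simp add: full_support_def)

lemma cumg_0 [simp]: "cumg g \<pi> 0 = 0"
  by (simp add: cumg_def)

lemma cumg_Suc [simp]: "cumg g \<pi> (Suc i) = cumg g \<pi> i + g (\<pi> i)"
  by (simp add: cumg_def)

lemma cumg_mono:
  assumes "full_support d g" "\<pi> permutes {..<d}" "i \<le> j" "j \<le> d"
  shows "cumg g \<pi> i \<le> cumg g \<pi> j"
  unfolding cumg_def
  by (rule sum_mono2) (use assms full_support_permuted_pos in \<open>auto intro: less_imp_le\<close>)

lemma cumg_total:
  assumes "full_support d g" "\<pi> permutes {..<d}"
  shows "cumg g \<pi> d = 1"
  using sum.permute[OF assms(2), of g] assms(1)
  by (simp add: cumg_def full_support_def prob_vec_def)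

lemma cumg_bounds:
  assumes "full_support d g" "\<pi> permutes {..<d}" "k \<le> d"
  shows "0 \<le> cumg g \<pi> k" "cumg g \<pi> k \<le> 1"
  using cumg_mono[OF assms(1,2), of 0 k] cumg_mono[OF assms(1,2), of k d]
    cumg_total[OF assms(1,2)] assms(3)
  by auto

lemma seg_overlap_full:
  "0 \<le> g (\<pi> i) \<Longrightarrow> cumg g \<pi> (Suc i) \<le> x \<Longrightarrow> seg_overlap g \<pi> i x = g (\<pi> i)"
  by (simp add: seg_overlap_def)

lemma seg_overlap_empty: "x \<le> cumg g \<pi> i \<Longrightarrow> seg_overlap g \<pi> i x = 0"
  by (simp add: seg_overlap_def)

lemma seg_overlap_bounds:
  "0 \<le> g (\<pi> i) \<Longrightarrow> 0 \<le> seg_overlap g \<pi> i x \<and> seg_overlap g \<pi> i x \<le> g (\<pi> i)"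
  by (simp add: seg_overlap_def)

lemma sum_seg_overlap:
  assumes fs: "full_support d g" and perm: "\<pi> permutes {..<d}" and x: "0 \<le> x" "x \<le> 1"
  shows "(\<Sum>i<d. seg_overlap g \<pi> i x) = x"
proof -
  have "seg_overlap g \<pi> i x = min x (cumg g \<pi> (Suc i)) - min x (cumg g \<pi> i)" if "i < d" for i
    using full_support_permuted_pos[OF fs perm that] by (auto simp: seg_overlap_def min_def max_def)
  then have "(\<Sum>i<d. seg_overlap g \<pi> i x) = (\<Sum>i<d. min x (cumg g \<pi> (Suc i)) - min x (cumg g \<pi> i))"
    by (intro sum.cong) auto
  also have "\<dots> = min x (cumg g \<pi> d) - min x (cumg g \<pi> 0)"
    by (rule sum_lessThan_telescope)
  finally show ?thesis
    using cumg_total[OF fs perm] x by simp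
qed

lemma seg_overlap_at_cumg:
  assumes fs: "full_support d g" and perm: "\<pi> permutes {..<d}" and "i < d" "k \<le> d"
  shows "seg_overlap g \<pi> i (cumg g \<pi> k) = (if i < k then g (\<pi> i) else 0)"
  using assms full_support_permuted_pos[OF fs perm, of i]
  by (auto intro!: seg_overlap_full seg_overlap_empty cumg_mono[OF fs perm])

lemma thermo_curve_at_cumg:
  assumes fs: "full_support d g" and perm: "\<pi> permutes {..<d}" and k: "k \<le> d"
  shows "thermo_curve d g p \<pi> (cumg g \<pi> k) = (\<Sum>i<k. p (\<pi> i))"
proof -
  have "thermo_curve d g p \<pi> (cumg g \<pi> k) = (\<Sum>i<d. if i < k then p (\<pi> i) else 0)"
    unfolding thermo_curve_eq_sum_overlap
    using seg_overlap_at_cumg[OF fs perm _ k] full_support_permuted_pos[OF fs perm]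
    by (intro sum.cong) (auto simp: thermo_slope_def less_imp_neq[symmetric])
  also have "\<dots> = (\<Sum>i<k. p (\<pi> i))"
    using k by (simp add: sum.If_cases) (metis Int_absorb1 lessThan_def lessThan_subset_iff)
  finally show ?thesis .
qed

lemma thermo_tangent_minus_curve:
  assumes fs: "full_support d g" and perm: "\<pi> permutes {..<d}" and j: "j < d"
    and x: "0 \<le> x" "x \<le> 1"
  shows "thermo_tangent g p \<pi> j x - thermo_curve d g p \<pi> x =
    (\<Sum>i<d. (thermo_slope g p \<pi> i - thermo_slope g p \<pi> j) *
       (seg_overlap g \<pi> i (cumg g \<pi> j) - seg_overlap g \<pi> i x))"
proof -
  let ?r = "thermo_slope g p \<pi>" and ?c = "\<lambda>i. seg_overlap g \<pi> i (cumg g \<pi> j)"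
    and ?o = "\<lambda>i. seg_overlap g \<pi> i x"
  have "x - cumg g \<pi> j = (\<Sum>i<d. ?o i) - (\<Sum>i<d. ?c i)"
    using sum_seg_overlap[OF fs perm x] sum_seg_overlap[OF fs perm cumg_bounds[OF fs perm]] j
    by simp
  moreover have "(\<Sum>i<j. p (\<pi> i)) = (\<Sum>i<d. ?r i * ?c i)"
    using thermo_curve_at_cumg[OF fs perm, of j p] j by (simp add: thermo_curve_eq_sum_overlap)
  moreover have "(\<Sum>i<d. (?r i - ?r j) * (?c i - ?o i)) =
      (\<Sum>i<d. ?r i * ?c i) + ?r j * ((\<Sum>i<d. ?o i) - (\<Sum>i<d. ?c i)) - (\<Sum>i<d. ?r i * ?o i)"
    by (simp add: algebra_simps sum.distrib sum_subtractf sum_distrib_left)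
  ultimately show ?thesis
    by (simp add: thermo_tangent_def thermo_curve_eq_sum_overlap)
qed

lemma thermo_curve_le_tangent:
  assumes ord: "thermo_order d g p \<pi>" and fs: "full_support d g" and j: "j < d"
    and x: "0 \<le> x" "x \<le> 1"
  shows "thermo_curve d g p \<pi> x \<le> thermo_tangent g p \<pi> j x"
proof -
  have perm: "\<pi> permutes {..<d}"
    and mono: "\<And>i k. i \<le> k \<Longrightarrow> k < d \<Longrightarrow> thermo_slope g p \<pi> k \<le> thermo_slope g p \<pi> i"
    using ord by (auto simp: thermo_order_def thermo_slope_def)
  have "0 \<le> (thermo_slope g p \<pi> i - thermo_slope g p \<pi> j) *
      (seg_overlap g \<pi> i (cumg g \<pi> j) - seg_overlap g \<pi> i x)" if i: "i < d" for i
  proof -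
    have g_nonneg: "0 \<le> g (\<pi> i)"
      using full_support_permuted_pos[OF fs perm i] by simp
    show ?thesis
    proof (cases "i < j")
      case True
      then show ?thesis
        using mono[of i j] j seg_overlap_at_cumg[OF fs perm i, of j]
          seg_overlap_bounds[of g \<pi> i x, OF g_nonneg]
        by simp
    next
      case False
      then show ?thesis
        using mono[of j i] i j seg_overlap_at_cumg[OF fs perm i, of j]
          seg_overlap_bounds[of g \<pi> i x, OF g_nonneg]
        by (simp add: mult_nonpos_nonneg)
    qed
  qed
  then have "0 \<le> thermo_tangent g p \<pi> j x - thermo_curve d g p \<pi> x"
    unfolding thermo_tangent_minus_curve[OF fs perm j x] by (intro sum_nonneg) simp
  then show ?thesis by simp
qed

lemma thermo_curve_eq_tangent:
  assumes fs: "full_support d g" and perm: "\<pi> permutes {..<d}" and j: "j < d"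
    and x: "cumg g \<pi> j \<le> x" "x \<le> cumg g \<pi> (Suc j)"
  shows "thermo_curve d g p \<pi> x = thermo_tangent g p \<pi> j x"
proof -
  have x01: "0 \<le> x" "x \<le> 1"
    using x cumg_bounds[OF fs perm, of j] cumg_bounds[OF fs perm, of "Suc j"] j by auto
  have "seg_overlap g \<pi> i (cumg g \<pi> j) = seg_overlap g \<pi> i x \<or> i = j" if i: "i < d" for i
  proof -
    have g_nonneg: "0 \<le> g (\<pi> i)"
      using full_support_permuted_pos[OF fs perm i] by simp
    consider "i < j" | "j < i" | "i = j" by linarith
    then show ?thesis
    proof cases
      case 1
      then have "cumg g \<pi> (Suc i) \<le> x"
        using cumg_mono[OF fs perm, of "Suc i" j] j x by simp
      then show ?thesis
        using 1 j seg_overlap_at_cumg[OF fs perm i, of j] seg_overlap_full[of g \<pi> i x, OF g_nonneg]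
        by simp
    next
      case 2
      then have "x \<le> cumg g \<pi> i"
        using cumg_mono[OF fs perm, of "Suc j" i] i x by simp
      then show ?thesis
        using 2 seg_overlap_at_cumg[OF fs perm i, of j] seg_overlap_empty j by simp
    qed simp
  qed
  then have "thermo_tangent g p \<pi> j x - thermo_curve d g p \<pi> x = 0"
    unfolding thermo_tangent_minus_curve[OF fs perm j x01] by (intro sum.neutral) fastforce
  then show ?thesis by simp
qed

lemma thermo_tangent_affine:
  "thermo_tangent g p \<pi> j x = thermo_tangent g p \<pi> j 0 + thermo_slope g p \<pi> j * x"
  by (simp add: thermo_tangent_def algebra_simps)

lemma thermo_tangent_0: "thermo_tangent g p \<pi> 0 x = p (\<pi> 0) / g (\<pi> 0) * x"
  by (simp add: thermo_tangent_def thermo_slope_def)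

lemma thermo_tangent_1:
  "thermo_tangent g p \<pi> 1 x = p (\<pi> 0) + p (\<pi> 1) / g (\<pi> 1) * (x - g (\<pi> 0))"
  by (simp add: thermo_tangent_def thermo_slope_def)

lemma cumg_segment_exists:
  assumes fs: "full_support d g" and perm: "\<pi> permutes {..<d}" and d: "0 < d"
    and x: "0 \<le> x" "x \<le> 1"
  shows "\<exists>j<d. cumg g \<pi> j \<le> x \<and> x \<le> cumg g \<pi> (Suc j)"
proof -
  define J where "J = {j. j < d \<and> cumg g \<pi> j \<le> x}"
  have J: "finite J" "0 \<in> J"
    using d x by (auto simp: J_def)
  define j where "j = Max J"
  have "j \<in> J"
    unfolding j_def using J by (intro Max_in) auto
  moreover have "x \<le> cumg g \<pi> (Suc j)"
  proof (cases "Suc j < d")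
    case True
    then have "Suc j \<notin> J"
      using Max_ge[OF J(1), of "Suc j"] by (auto simp: j_def)
    then show ?thesis
      using True by (auto simp: J_def)
  next
    case False
    then have "Suc j = d"
      using \<open>j \<in> J\<close> by (simp add: J_def)
    then show ?thesis
      using cumg_total[OF fs perm] x by simp
  qed
  ultimately show ?thesis
    by (auto simp: J_def)
qed

lemma thermo_curve_concave:
  assumes ord: "thermo_order d g p \<pi>" and fs: "full_support d g" and d: "0 < d"
  shows "concave_on {0..1} (thermo_curve d g p \<pi>)"
proof (rule concave_on_linorderI)
  fix t x y :: real
  assume t: "0 < t" "t < 1" and xy: "x \<in> {0..1}" "y \<in> {0..1}"
  have perm: "\<pi> permutes {..<d}"
    using ord by (simp add: thermo_order_def)
  define z where "z = (1 - t) * x + t * y"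
  have "0 \<le> z" "z \<le> 1"
    using t xy convex_bound_le[of x 1 y "1 - t" t] by (auto simp: z_def)
  then obtain j where j: "j < d" "cumg g \<pi> j \<le> z" "z \<le> cumg g \<pi> (Suc j)"
    using cumg_segment_exists[OF fs perm d] by blast
  have "(1 - t) * thermo_curve d g p \<pi> x + t * thermo_curve d g p \<pi> y
      \<le> (1 - t) * thermo_tangent g p \<pi> j x + t * thermo_tangent g p \<pi> j y"
    using t xy thermo_curve_le_tangent[OF ord fs j(1)]
    by (intro add_mono mult_left_mono) auto
  also have "\<dots> = thermo_tangent g p \<pi> j z"
    by (subst (1 2 3) thermo_tangent_affine) (simp add: z_def algebra_simps)
  also have "\<dots> = thermo_curve d g p \<pi> z"
    using thermo_curve_eq_tangent[OF fs perm j] by simp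
  finally show "(1 - t) * thermo_curve d g p \<pi> x + t * thermo_curve d g p \<pi> y
      \<le> thermo_curve d g p \<pi> ((1 - t) *\<^sub>R x + t *\<^sub>R y)"
    by (simp add: z_def)
qed simp

lemma concave_on_ge_affine:
  fixes f l :: "real \<Rightarrow> real"
  assumes f: "concave_on {a..b} f" and c: "c \<in> {a..b}"
    and fa: "l a \<le> f a" and fb: "l b \<le> f b" and l: "\<And>x. l x = u + v * x"
  shows "l c \<le> f c"
proof (cases "a = b")
  case True
  then show ?thesis using c fa by simp
next
  case False
  then have ab: "a < b" using c by simp
  define t where "t = (c - a) / (b - a)"
  have t: "0 \<le> t" "t \<le> 1"
    using ab c by (auto simp: t_def field_simps)
  have "t * (b - a) = c - a"
    using ab by (simp add: t_def)
  then have ct: "c = (1 - t) * a + t * b"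
    by (simp add: algebra_simps)
  have "l c = (1 - t) * l a + t * l b"
    by (simp add: l ct algebra_simps)
  also have "\<dots> \<le> (1 - t) * f a + t * f b"
    using t fa fb by (intro add_mono mult_left_mono) auto
  also have "\<dots> \<le> f c"
    using concave_onD_Icc[OF f, of t] ab t by (simp add: ct)
  finally show ?thesis .
qed

(* The curve of q lies below its first two supporting lines, and the concave curve of p lies
   above its chords over [0, s] and [s, 1]; so comparing these lines with p's curve at 0, s
   and 1 suffices. *)
lemma thermomaj_if_tangents_below:
  assumes op: "thermo_order d g p \<pi>p" and oq: "thermo_order d g q \<pi>q" and fs: "full_support d g"
    and p: "prob_vec d p" and q: "prob_vec d q" and d: "1 < d" and s: "0 \<le> s" "s \<le> 1"
    and below0: "thermo_tangent g q \<pi>q 0 s \<le> thermo_curve d g p \<pi>p s"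
    and below1: "thermo_tangent g q \<pi>q 1 s \<le> thermo_curve d g p \<pi>p s"
    and end1: "thermo_tangent g q \<pi>q 1 1 \<le> 1"
  shows "thermomaj d g p q"
proof -
  let ?cp = "thermo_curve d g p \<pi>p"
  have permp: "\<pi>p permutes {..<d}"
    using op by (simp add: thermo_order_def)
  have cp0: "?cp 0 = 0"
    using thermo_curve_at_cumg[OF fs permp, of 0 p] by simp
  have cp1: "?cp 1 = 1"
    using thermo_curve_at_cumg[OF fs permp, of d p] cumg_total[OF fs permp]
      sum.permute[OF permp, of p] p
    by (simp add: prob_vec_def)
  have concave: "concave_on {a..b} ?cp" if "0 \<le> a" "b \<le> 1" for a b
  proof -
    have "convex_on {0..1} (\<lambda>x. - ?cp x)"
      using thermo_curve_concave[OF op fs] d unfolding concave_on_def by simp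
    then have "convex_on {a..b} (\<lambda>x. - ?cp x)"
      by (rule convex_on_subset) (use that in auto)
    then show ?thesis
      unfolding concave_on_def .
  qed
  have "thermo_curve d g q \<pi>q x \<le> ?cp x" if x: "0 \<le> x" "x \<le> 1" for x
  proof (cases "x \<le> s")
    case True
    have "thermo_tangent g q \<pi>q 0 x \<le> ?cp x"
    proof (rule concave_on_ge_affine[OF concave[of 0 s] _ _ _ thermo_tangent_affine])
      show "thermo_tangent g q \<pi>q 0 0 \<le> ?cp 0"
        using cp0 by (simp add: thermo_tangent_def)
    qed (use s x True below0 in auto)
    then show ?thesis
      using thermo_curve_le_tangent[OF oq fs, of 0 x] d x by simp
  next
    case False
    have "thermo_tangent g q \<pi>q 1 x \<le> ?cp x"
      by (rule concave_on_ge_affine[OF concave[of s 1] _ _ _ thermo_tangent_affine])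
        (use s x False below1 end1 cp1 in auto)
    then show ?thesis
      using thermo_curve_le_tangent[OF oq fs, of 1 x] d x by simp
  qed
  then show ?thesis
    unfolding thermomaj_def using fs p q op oq by (meson atLeastAtMost_iff)
qed

lemma thermomaj_refl:
  "full_support d g \<Longrightarrow> prob_vec d p \<Longrightarrow> thermo_order d g p \<pi> \<Longrightarrow> thermomaj d g p p"
  by (auto simp: thermomaj_def)

section \<open>Re-weighted states and Gibbs states\<close>

definition rev_perm :: "nat \<Rightarrow> nat \<Rightarrow> nat" where
  "rev_perm d k = (if k < d then d - 1 - k else k)"

lemma rev_perm_permutes: "rev_perm d permutes {..<d}"
proof (rule bij_imp_permutes)
  show "bij_betw (rev_perm d) {..<d} {..<d}"
    by (rule bij_betw_byWitness[where f' = "rev_perm d"]) (auto simp: rev_perm_def)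
qed (simp add: rev_perm_def)

lemma thermo_order_self:
  assumes "full_support d g" "\<pi> permutes {..<d}"
  shows "thermo_order d g g \<pi>"
proof -
  have "g (\<pi> i) / g (\<pi> i) = 1" if "i < d" for i
    using full_support_permuted_pos[OF assms that] by simp
  then show ?thesis
    using assms(2) by (simp add: thermo_order_def)
qed

lemma thermo_order_first_ge:
  assumes h: "full_support d h" and g: "prob_vec d g" and ord: "thermo_order d h g \<pi>" and d: "0 < d"
  shows "h (\<pi> 0) \<le> g (\<pi> 0)"
proof -
  have perm: "\<pi> permutes {..<d}"
    using ord by (simp add: thermo_order_def)
  define r where "r = g (\<pi> 0) / h (\<pi> 0)"
  have "g (\<pi> i) \<le> r * h (\<pi> i)" if "i < d" for i
  proof -
    have "g (\<pi> i) / h (\<pi> i) \<le> r"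
      using ord that by (simp add: thermo_order_def r_def)
    then show ?thesis
      using full_support_permuted_pos[OF h perm that] by (simp add: divide_le_eq)
  qed
  then have "(\<Sum>i<d. g (\<pi> i)) \<le> r * (\<Sum>i<d. h (\<pi> i))"
    unfolding sum_distrib_left by (intro sum_mono) simp
  then have "1 \<le> r"
    using sum.permute[OF perm, of g] sum.permute[OF perm, of h] g h
    by (simp add: full_support_def prob_vec_def)
  then show ?thesis
    using full_support_permuted_pos[OF h perm d] by (simp add: r_def le_divide_eq)
qed

lemma full_support_lt_1:
  assumes g: "full_support d g" and "i < d" "j < d" "i \<noteq> j"
  shows "g i < 1"
proof -
  have "(\<Sum>k\<in>{i, j}. g k) \<le> (\<Sum>k<d. g k)"
    using g assms by (intro sum_mono2) (auto simp: full_support_def prob_vec_def)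
  moreover have "0 < g j"
    using g assms by (simp add: full_support_def)
  moreover have "(\<Sum>k<d. g k) = 1"
    using g by (simp add: full_support_def prob_vec_def)
  ultimately show ?thesis
    using assms(4) by simp
qed

definition reweight :: "nat \<Rightarrow> (nat \<Rightarrow> real) \<Rightarrow> nat \<Rightarrow> real \<Rightarrow> nat \<Rightarrow> real" where
  "reweight d g m t k = (if k = m then t else if k < d then (1 - t) / (1 - g m) * g k else 0)"

lemma prob_vec_sum_remove:
  "prob_vec d g \<Longrightarrow> m < d \<Longrightarrow> (\<Sum>k\<in>{..<d} - {m}. g k) = 1 - g m"
  by (simp add: prob_vec_def sum_diff1)

lemma sum_reweight:
  assumes "prob_vec d g" "m < d" "g m < 1" "\<And>k. k < d \<Longrightarrow> f k = (if k = m then a else c * g k)"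
  shows "(\<Sum>k<d. f k) = a + c * (1 - g m)"
  using assms sum.remove[of "{..<d}" m f] prob_vec_sum_remove[OF assms(1,2)]
  by (simp add: sum_distrib_left[symmetric])

lemma prob_vec_reweight:
  assumes g: "prob_vec d g" and m: "m < d" "g m < 1" and t: "0 \<le> t" "t \<le> 1"
  shows "prob_vec d (reweight d g m t)"
proof -
  have "(\<Sum>k<d. reweight d g m t k) = t + (1 - t) / (1 - g m) * (1 - g m)"
    by (rule sum_reweight[OF g m]) (simp add: reweight_def)
  then show ?thesis
    using g m t by (auto simp: prob_vec_def reweight_def)
qed

lemma vdist_reweight:
  assumes g: "prob_vec d g" and m: "m < d" "g m < 1"
  shows "vdist d (reweight d g m t) (reweight d g m u) = 2 * \<bar>t - u\<bar>"
proof -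
  have "vdist d (reweight d g m t) (reweight d g m u) = \<bar>t - u\<bar> + \<bar>t - u\<bar> / (1 - g m) * (1 - g m)"
    unfolding vdist_def
  proof (rule sum_reweight[OF g m])
    fix k assume "k < d"
    then have "\<bar>(1 - t) / (1 - g m) * g k - (1 - u) / (1 - g m) * g k\<bar> = \<bar>t - u\<bar> / (1 - g m) * g k"
      using g m by (simp add: prob_vec_def abs_mult abs_minus_commute diff_divide_distrib[symmetric]
          left_diff_distrib[symmetric])
    then show "\<bar>reweight d g m t k - reweight d g m u k\<bar> =
        (if k = m then \<bar>t - u\<bar> else \<bar>t - u\<bar> / (1 - g m) * g k)"
      using \<open>k < d\<close> by (simp add: reweight_def)
  qed
  then show ?thesis
    using m by simp
qed

lemma reweight_self:
  assumes "prob_vec d g" "m < d" "g m < 1"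
  shows "reweight d g m (g m) = g"
  using assms by (auto simp: reweight_def prob_vec_def fun_eq_iff)

lemma thermo_order_reweight:
  assumes h: "full_support d h" and g: "prob_vec d g" and ord: "thermo_order d h g \<pi>"
    and m: "\<pi> 0 = m" "g m < 1" and t: "g m \<le> t" "t \<le> 1"
  shows "thermo_order d h (reweight d g m t) \<pi>"
  unfolding thermo_order_def
proof (intro conjI allI impI)
  show perm: "\<pi> permutes {..<d}"
    using ord by (simp add: thermo_order_def)
  define c where "c = (1 - t) / (1 - g m)"
  have c: "0 \<le> c" "c \<le> 1"
    using m t by (auto simp: c_def)
  have ratio: "g (\<pi> j) / h (\<pi> j) \<le> g (\<pi> i) / h (\<pi> i)" if "i \<le> j" "j < d" for i j
    using ord that by (simp add: thermo_order_def)
  have shifted: "reweight d g m t (\<pi> j) = c * g (\<pi> j)" if "0 < j" "j < d" for j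
  proof -
    have "\<pi> j \<noteq> m"
      using permutes_inj[OF perm] m(1) that(1) by (metis inj_eq less_numeral_extra(3))
    then show ?thesis
      using permutes_in_image[OF perm] that by (simp add: reweight_def c_def)
  qed
  fix i j assume ij: "i \<le> j" "j < d"
  have hpos: "0 < h (\<pi> j)"
    using full_support_permuted_pos[OF h perm ij(2)] .
  have gnonneg: "0 \<le> g (\<pi> j) / h (\<pi> j)"
    using g hpos permutes_in_image[OF perm] ij by (simp add: prob_vec_def)
  show "reweight d g m t (\<pi> j) / h (\<pi> j) \<le> reweight d g m t (\<pi> i) / h (\<pi> i)"
  proof (cases "j = 0")
    case False
    show ?thesis
    proof (cases "i = 0")
      case True
      have "c * (g (\<pi> j) / h (\<pi> j)) \<le> g (\<pi> 0) / h (\<pi> 0)"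
        using mult_left_le_one_le[OF gnonneg c(1,2)] ratio[of 0 j] ij by simp
      also have "\<dots> \<le> t / h (\<pi> 0)"
        using t m full_support_permuted_pos[OF h perm, of 0] ij by (simp add: divide_right_mono)
      finally show ?thesis
        using True False ij shifted[of j] m(1) by (simp add: reweight_def)
    next
      case i: False
      have "c * (g (\<pi> j) / h (\<pi> j)) \<le> c * (g (\<pi> i) / h (\<pi> i))"
        by (intro mult_left_mono ratio[OF ij] c(1))
      then show ?thesis
        using i False ij shifted[of j] shifted[of i] by simp
    qed
  qed (use ij in simp)
qed

lemma gibbs_full_support:
  assumes "0 < d"
  shows "full_support d (gibbs d E b)"
proof -
  define Z where "Z = (\<Sum>i<d. exp (- b * E i))"
  have Z: "0 < Z"
    unfolding Z_def using assms by (intro sum_pos) auto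
  have "(\<Sum>i<d. gibbs d E b i) = (\<Sum>i<d. exp (- b * E i) / Z)"
    by (simp add: gibbs_def Z_def)
  then have "(\<Sum>i<d. gibbs d E b i) = 1"
    using Z by (simp add: sum_divide_distrib[symmetric] Z_def)
  moreover have "\<forall>i<d. 0 < gibbs d E b i"
    using Z by (simp add: gibbs_def Z_def)
  ultimately show ?thesis
    by (simp add: full_support_def prob_vec_def gibbs_def less_imp_le)
qed

lemma gibbs_cross_le:
  assumes "i < d" "j < d" "b \<le> a" "E i \<le> E j"
  shows "gibbs d E a j * gibbs d E b i \<le> gibbs d E a i * gibbs d E b j"
proof -
  define Z where "Z c = (\<Sum>k<d. exp (- c * E k))" for c
  have Z: "0 < Z a * Z b"
    unfolding Z_def using assms by (intro mult_pos_pos sum_pos) auto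
  have "(a - b) * (E i - E j) \<le> 0"
    using assms by (intro mult_nonneg_nonpos) auto
  then have "exp (- a * E j) * exp (- b * E i) \<le> exp (- a * E i) * exp (- b * E j)"
    by (simp add: exp_add[symmetric] algebra_simps)
  then have "exp (- a * E j) * exp (- b * E i) / (Z a * Z b)
      \<le> exp (- a * E i) * exp (- b * E j) / (Z a * Z b)"
    using Z by (intro divide_right_mono) auto
  then show ?thesis
    using assms by (simp add: gibbs_def Z_def)
qed

lemma gibbs_antimono:
  assumes "i < d" "j < d" "0 \<le> b" "E i \<le> E j"
  shows "gibbs d E b j \<le> gibbs d E b i"
  using assms by (simp add: gibbs_def divide_right_mono mult_left_mono sum_nonneg)

lemma gibbs_strict_antimono:
  assumes "i < d" "j < d" "0 < b" "E i < E j"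
  shows "gibbs d E b j < gibbs d E b i"
proof -
  have "0 < (\<Sum>k<d. exp (- b * E k))"
    using assms by (intro sum_pos) auto
  then show ?thesis
    using assms by (simp add: gibbs_def divide_strict_right_mono)
qed

lemma thermo_order_gibbs_colder:
  assumes E: "\<forall>i j. i \<le> j \<longrightarrow> j < d \<longrightarrow> E i \<le> E j" and "0 < d" "b \<le> a"
  shows "thermo_order d (gibbs d E b) (gibbs d E a) id"
  unfolding thermo_order_def
proof (intro conjI allI impI)
  fix i j assume ij: "i \<le> j" "j < d"
  then show "gibbs d E a (id j) / gibbs d E b (id j) \<le> gibbs d E a (id i) / gibbs d E b (id i)"
    using gibbs_cross_le[of i d j b a E] gibbs_full_support[OF assms(2), of E b] assms
    by (simp add: divide_simps full_support_def mult.commute)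
qed simp

lemma thermo_order_gibbs_hotter:
  assumes E: "\<forall>i j. i \<le> j \<longrightarrow> j < d \<longrightarrow> E i \<le> E j" and "0 < d" "b \<le> a"
  shows "thermo_order d (gibbs d E a) (gibbs d E b) (rev_perm d)"
  unfolding thermo_order_def
proof (intro conjI allI impI)
  fix i j assume ij: "i \<le> j" "j < d"
  define x y where "x = rev_perm d j" and "y = rev_perm d i"
  have xy: "x \<le> y" "y < d"
    using ij by (auto simp: x_def y_def rev_perm_def)
  show "gibbs d E b (rev_perm d j) / gibbs d E a (rev_perm d j)
      \<le> gibbs d E b (rev_perm d i) / gibbs d E a (rev_perm d i)"
    unfolding x_def[symmetric] y_def[symmetric]
    using gibbs_cross_le[of x d y b a E] gibbs_full_support[OF assms(2), of E a] assms xy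
    by (simp add: divide_simps full_support_def mult.commute)
qed (rule rev_perm_permutes)

section \<open>Exponential approximation within F_AB\<close>

lemma funpow_affine_contraction:
  fixes f :: "real \<Rightarrow> real"
  assumes "\<And>x. f x - c = r * (x - c)"
  shows "(f ^^ m) x - c = r ^ m * (x - c)"
  by (induction m) (simp_all add: assms)

lemma mem_convex_combs: "p \<in> S \<Longrightarrow> p \<in> convex_combs S"
  unfolding convex_combs_def
  by (intro CollectI exI[of _ 1] exI[of _ "\<lambda>_. p"] exI[of _ "\<lambda>_. 1"]) simp

lemma F_N_exponential_bound:
  assumes \<rho>: "0 < \<rho>" "\<rho> < 1" and K: "0 \<le> K"
    and chain: "\<And>n. x n \<in> chain_ends d a b n \<union> chain_ends d b a n"
    and bound: "\<And>n. vdist d (x n) p \<le> K * \<rho> ^ (n div 2)"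
  shows "\<exists>C r. 0 < r \<and> r < 1 \<and> (\<forall>N\<ge>1. \<exists>q\<in>F_N d a b N. vdist d q p \<le> C * r ^ N)"
proof (intro exI conjI allI impI)
  define r where "r = sqrt \<rho>"
  show r: "0 < r" "r < 1"
    using \<rho> by (simp_all add: r_def)
  fix N :: nat assume "1 \<le> N"
  then obtain n where N: "N = Suc n"
    using not0_implies_Suc by fastforce
  have "x n \<in> F_N d a b N"
    using chain[of n] by (simp add: F_N_def N mem_convex_combs)
  moreover have "\<rho> ^ Suc (n div 2) = r ^ (2 * Suc (n div 2))"
    using \<rho> by (simp add: r_def power_mult)
  then have "\<rho> ^ Suc (n div 2) \<le> r ^ N"
    using r N power_decreasing[of N "2 * Suc (n div 2)" r] by auto
  then have "K * \<rho> ^ (n div 2) \<le> K / \<rho> * r ^ N"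
    using K \<rho> by (simp add: field_simps mult_left_mono)
  ultimately show "\<exists>q\<in>F_N d a b N. vdist d q p \<le> K / \<rho> * r ^ N"
    using bound[of n] by force
qed

lemma F_AB_if_exponential_bound:
  assumes zero: "\<forall>i\<ge>d. p i = 0"
    and bound: "\<exists>C r. 0 < r \<and> r < 1 \<and> (\<forall>N\<ge>1. \<exists>q\<in>F_N d a b N. vdist d q p \<le> C * r ^ N)"
  shows "p \<in> F_AB d a b"
  unfolding F_AB_def
proof (intro CollectI conjI allI impI zero[rule_format])
  fix \<epsilon> :: real assume \<epsilon>: "0 < \<epsilon>"
  obtain C r where r: "0 < r" "r < 1" and C: "\<forall>N\<ge>1. \<exists>q\<in>F_N d a b N. vdist d q p \<le> C * r ^ N"
    using bound by blast
  obtain n where n: "r ^ n < \<epsilon> / (\<bar>C\<bar> + 1)"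
    using real_arch_pow_inv[of "\<epsilon> / (\<bar>C\<bar> + 1)" r] \<epsilon> r by auto
  obtain q where q: "q \<in> F_N d a b (Suc n)" "vdist d q p \<le> C * r ^ Suc n"
    using C[rule_format, of "Suc n"] by auto
  have "C * r ^ Suc n \<le> (\<bar>C\<bar> + 1) * r ^ n"
    using r by (intro mult_mono) (auto simp: power_decreasing)
  also have "\<dots> < \<epsilon>"
    using n by (simp add: field_simps)
  finally have "vdist d p q < \<epsilon>"
    using q by (simp add: vdist_def abs_minus_commute)
  then show "\<exists>N\<ge>1. \<exists>q\<in>F_N d a b N. vdist d p q < \<epsilon>"
    using q by (intro exI[of _ "Suc n"]) auto
qed

section \<open>The two strokes\<close>

locale two_baths =
  fixes d :: nat and E :: "nat \<Rightarrow> real" and \<alpha> \<beta> :: real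
  assumes two_levels: "2 \<le> d"
    and E_mono: "\<forall>i j. i \<le> j \<longrightarrow> j < d \<longrightarrow> E i \<le> E j"
    and E_gap: "E 0 < E (d - 1)"
    and colder: "\<beta> < \<alpha>" and hot_nonneg: "0 \<le> \<beta>"
begin

abbreviation gs where "gs \<equiv> gibbs d E \<alpha>"
abbreviation Gs where "Gs \<equiv> gibbs d E \<beta>"

lemma d_pos: "0 < d" and top_lt: "d - 1 < d" and top_ne_0: "d - 1 \<noteq> 0"
  using two_levels by auto

lemma full_support_gs: "full_support d gs"
  and full_support_Gs: "full_support d Gs"
  using gibbs_full_support[OF d_pos] by auto

lemma prob_vec_gs: "prob_vec d gs" and prob_vec_Gs: "prob_vec d Gs"
  using full_support_gs full_support_Gs by (simp_all add: full_support_def)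

lemma gs_pos: "i < d \<Longrightarrow> 0 < gs i" and Gs_pos: "i < d \<Longrightarrow> 0 < Gs i"
  using full_support_gs full_support_Gs by (simp_all add: full_support_def)

lemma order_gs_Gs: "thermo_order d Gs gs id"
  using thermo_order_gibbs_colder[OF E_mono d_pos] colder by simp

lemma order_Gs_gs: "thermo_order d gs Gs (rev_perm d)"
  using thermo_order_gibbs_hotter[OF E_mono d_pos] colder by simp

lemma rev_perm_0: "rev_perm d 0 = d - 1" and rev_perm_1: "rev_perm d 1 = d - 2"
  using two_levels by (simp_all add: rev_perm_def)

lemma Gs0_le_gs0: "Gs 0 \<le> gs 0"
  using thermo_order_first_ge[OF full_support_Gs prob_vec_gs order_gs_Gs d_pos] by simp

lemma gs_top_le_Gs_top: "gs (d - 1) \<le> Gs (d - 1)"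
  using thermo_order_first_ge[OF full_support_gs prob_vec_Gs order_Gs_gs d_pos]
  by (simp add: rev_perm_0)

lemma gs_top_lt_gs0: "gs (d - 1) < gs 0"
  using gibbs_strict_antimono[OF d_pos top_lt _ E_gap] colder hot_nonneg by simp

lemma Gs_top_le_Gs0: "Gs (d - 1) \<le> Gs 0"
  using gibbs_antimono[OF d_pos top_lt hot_nonneg] E_gap by simp

lemma gs0_lt_1: "gs 0 < 1"
  using full_support_lt_1[OF full_support_gs d_pos top_lt] top_ne_0 by simp

lemma Gs_top_lt_1: "Gs (d - 1) < 1"
  using full_support_lt_1[OF full_support_Gs top_lt d_pos] top_ne_0 by simp

lemma prob_vec_reweight_gs: "gs 0 \<le> t \<Longrightarrow> t \<le> 1 \<Longrightarrow> prob_vec d (reweight d gs 0 t)"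
  using prob_vec_reweight[OF prob_vec_gs d_pos gs0_lt_1] gs_pos[OF d_pos] by simp

lemma prob_vec_reweight_Gs: "Gs (d - 1) \<le> T \<Longrightarrow> T \<le> 1 \<Longrightarrow> prob_vec d (reweight d Gs (d - 1) T)"
  using prob_vec_reweight[OF prob_vec_Gs top_lt Gs_top_lt_1] Gs_pos[OF top_lt] by simp

lemma reweight_gs_order_gs: "gs 0 \<le> t \<Longrightarrow> t \<le> 1 \<Longrightarrow> thermo_order d gs (reweight d gs 0 t) id"
  using thermo_order_reweight[OF full_support_gs prob_vec_gs thermo_order_self[OF full_support_gs]]
    gs0_lt_1 by simp

lemma reweight_gs_order_Gs: "gs 0 \<le> t \<Longrightarrow> t \<le> 1 \<Longrightarrow> thermo_order d Gs (reweight d gs 0 t) id"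
  using thermo_order_reweight[OF full_support_Gs prob_vec_gs order_gs_Gs] gs0_lt_1 by simp

lemma reweight_Gs_order_Gs:
  "Gs (d - 1) \<le> T \<Longrightarrow> T \<le> 1 \<Longrightarrow> thermo_order d Gs (reweight d Gs (d - 1) T) (rev_perm d)"
  using thermo_order_reweight[OF full_support_Gs prob_vec_Gs
      thermo_order_self[OF full_support_Gs rev_perm_permutes]] Gs_top_lt_1 rev_perm_0
  by simp

lemma reweight_Gs_order_gs:
  "Gs (d - 1) \<le> T \<Longrightarrow> T \<le> 1 \<Longrightarrow> thermo_order d gs (reweight d Gs (d - 1) T) (rev_perm d)"
  using thermo_order_reweight[OF full_support_gs prob_vec_Gs order_Gs_gs] Gs_top_lt_1 rev_perm_0
  by simp

(* Chosen so that the elbow (Gs (d - 1), T) of the new curve lies on the first segment of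
   the old curve. *)
definition hot_stroke :: "real \<Rightarrow> real" where
  "hot_stroke t = t * Gs (d - 1) / Gs 0"

(* Chosen so that the second segment of the new curve runs from the first elbow
   (gs (d - 1), T) of the old curve to (1, 1). *)
definition cold_stroke :: "real \<Rightarrow> real" where
  "cold_stroke T = 1 - (1 - T) * ((1 - gs 0) / (1 - gs (d - 1)))"

lemma hot_stroke_range:
  assumes "gs 0 \<le> t" "t \<le> 1"
  shows "Gs (d - 1) \<le> hot_stroke t" "hot_stroke t \<le> 1"
proof -
  have "Gs (d - 1) * Gs 0 \<le> Gs (d - 1) * t"
    using assms Gs0_le_gs0 Gs_pos[OF top_lt] by (intro mult_left_mono) auto
  then show "Gs (d - 1) \<le> hot_stroke t"
    using Gs_pos[OF d_pos] by (simp add: hot_stroke_def le_divide_eq mult.commute)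
  have "t * Gs (d - 1) \<le> 1 * Gs 0"
    using assms Gs_top_le_Gs0 Gs_pos[OF top_lt] by (intro mult_mono) auto
  then show "hot_stroke t \<le> 1"
    using Gs_pos[OF d_pos] by (simp add: hot_stroke_def divide_le_eq)
qed

lemma cold_stroke_range:
  assumes "Gs (d - 1) \<le> T" "T \<le> 1"
  shows "gs 0 \<le> cold_stroke T" "cold_stroke T \<le> 1"
proof -
  have gap: "0 < 1 - gs (d - 1)" "0 < 1 - gs 0"
    using gs_top_lt_gs0 gs0_lt_1 by auto
  have "(1 - T) * (1 - gs 0) \<le> (1 - gs (d - 1)) * (1 - gs 0)"
    using assms gs_top_le_Gs_top gap by (intro mult_right_mono) auto
  then show "gs 0 \<le> cold_stroke T"
    using gap by (simp add: cold_stroke_def field_simps)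
  show "cold_stroke T \<le> 1"
    using assms gap by (simp add: cold_stroke_def)
qed

lemma hot_stroke_thermomaj:
  assumes t: "gs 0 \<le> t" "t \<le> 1"
  shows "thermomaj d Gs (reweight d gs 0 t) (reweight d Gs (d - 1) (hot_stroke t))"
proof -
  define T where "T = hot_stroke t"
  have T: "Gs (d - 1) \<le> T" "T \<le> 1"
    using hot_stroke_range[OF t] by (simp_all add: T_def)
  let ?p = "reweight d gs 0 t" and ?q = "reweight d Gs (d - 1) T"
  have "thermo_curve d Gs ?p id (Gs (d - 1)) = thermo_tangent Gs ?p id 0 (Gs (d - 1))"
    using Gs_top_le_Gs0 Gs_pos[OF top_lt]
    by (intro thermo_curve_eq_tangent[OF full_support_Gs permutes_id d_pos]) auto
  then have curve: "thermo_curve d Gs ?p id (Gs (d - 1)) = T"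
    by (simp add: thermo_tangent_0 reweight_def T_def hot_stroke_def)
  have "d - 2 \<noteq> d - 1" "d - 2 < d"
    using two_levels by auto
  then have slope: "?q (d - 2) / Gs (d - 2) = (1 - T) / (1 - Gs (d - 1))"
    using Gs_pos[of "d - 2"] by (simp add: reweight_def)
  have "thermomaj d Gs ?p ?q"
  proof (rule thermomaj_if_tangents_below[where s = "Gs (d - 1)", OF reweight_gs_order_Gs[OF t]
        reweight_Gs_order_Gs[OF T] full_support_Gs prob_vec_reweight_gs[OF t]
        prob_vec_reweight_Gs[OF T]])
    show "thermo_tangent Gs ?q (rev_perm d) 0 (Gs (d - 1)) \<le> thermo_curve d Gs ?p id (Gs (d - 1))"
      unfolding thermo_tangent_0 rev_perm_0 curve using Gs_pos[OF top_lt]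
      by (simp add: reweight_def)
    show "thermo_tangent Gs ?q (rev_perm d) 1 (Gs (d - 1)) \<le> thermo_curve d Gs ?p id (Gs (d - 1))"
      unfolding thermo_tangent_1 rev_perm_0 rev_perm_1 curve slope by (simp add: reweight_def)
    show "thermo_tangent Gs ?q (rev_perm d) 1 1 \<le> 1"
      unfolding thermo_tangent_1 rev_perm_0 rev_perm_1 slope using Gs_top_lt_1
      by (simp add: reweight_def)
  qed (use two_levels Gs_top_lt_1 Gs_pos[OF top_lt] in auto)
  then show ?thesis
    by (simp add: T_def)
qed

lemma cold_stroke_thermomaj:
  assumes T: "Gs (d - 1) \<le> T" "T \<le> 1"
  shows "thermomaj d gs (reweight d Gs (d - 1) T) (reweight d gs 0 (cold_stroke T))"
proof -
  define t where "t = cold_stroke T"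
  have t: "gs 0 \<le> t" "t \<le> 1"
    using cold_stroke_range[OF T] by (simp_all add: t_def)
  have gap: "0 < 1 - gs (d - 1)" "0 < 1 - gs 0"
    using gs_top_lt_gs0 gs0_lt_1 by auto
  let ?p = "reweight d Gs (d - 1) T" and ?q = "reweight d gs 0 t"
  have "thermo_curve d gs ?p (rev_perm d) (gs (d - 1)) =
      thermo_tangent gs ?p (rev_perm d) 0 (gs (d - 1))"
    using gs_pos[OF top_lt] rev_perm_0
    by (intro thermo_curve_eq_tangent[OF full_support_gs rev_perm_permutes d_pos]) auto
  then have curve: "thermo_curve d gs ?p (rev_perm d) (gs (d - 1)) = T"
    using gs_pos[OF top_lt] by (simp add: thermo_tangent_0 rev_perm_0 reweight_def)
  have slope: "?q 1 / gs 1 = (1 - T) / (1 - gs (d - 1))"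
    using gs_pos[of 1] two_levels gap by (simp add: reweight_def t_def cold_stroke_def)
  have "T * gs 0 - t * gs (d - 1) = (T - gs (d - 1)) * (gs 0 - gs (d - 1)) / (1 - gs (d - 1))"
    using gap by (simp add: t_def cold_stroke_def field_simps)
  also have "\<dots> \<ge> 0"
    using T gs_top_le_Gs_top gs_top_lt_gs0 gap by simp
  finally have below0: "t / gs 0 * gs (d - 1) \<le> T"
    using gs_pos[OF d_pos] by (simp add: field_simps)
  have "(1 - T) / (1 - gs (d - 1)) * (gs (d - 1) - gs 0) =
      (1 - T) * ((1 - gs 0) / (1 - gs (d - 1)) - 1)"
    using gap by (simp add: field_simps)
  then have below1: "t + (1 - T) / (1 - gs (d - 1)) * (gs (d - 1) - gs 0) \<le> T"
    by (simp add: t_def cold_stroke_def algebra_simps)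
  have "thermomaj d gs ?p ?q"
  proof (rule thermomaj_if_tangents_below[where s = "gs (d - 1)", OF reweight_Gs_order_gs[OF T]
        reweight_gs_order_gs[OF t] full_support_gs prob_vec_reweight_Gs[OF T]
        prob_vec_reweight_gs[OF t]])
    show "thermo_tangent gs ?q id 0 (gs (d - 1)) \<le> thermo_curve d gs ?p (rev_perm d) (gs (d - 1))"
      unfolding thermo_tangent_0 curve using below0 by (simp add: reweight_def)
    show "thermo_tangent gs ?q id 1 (gs (d - 1)) \<le> thermo_curve d gs ?p (rev_perm d) (gs (d - 1))"
      unfolding thermo_tangent_1 id_apply curve slope using below1 by (simp add: reweight_def)
    show "thermo_tangent gs ?q id 1 1 \<le> 1"
      unfolding thermo_tangent_1 id_apply slope
      using gap by (simp add: reweight_def t_def cold_stroke_def field_simps)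
  qed (use two_levels gap gs_pos[OF top_lt] in auto)
  then show ?thesis
    by (simp add: t_def)
qed

definition cold_cycle :: "real \<Rightarrow> real" where
  "cold_cycle t = cold_stroke (hot_stroke t)"

definition hot_cycle :: "real \<Rightarrow> real" where
  "hot_cycle T = hot_stroke (cold_stroke T)"

lemma cold_cycle_range:
  assumes "gs 0 \<le> t" "t \<le> 1"
  shows "gs 0 \<le> cold_cycle t \<and> cold_cycle t \<le> 1"
  using cold_stroke_range[OF hot_stroke_range[OF assms]] by (simp add: cold_cycle_def)

lemma hot_cycle_range:
  assumes "Gs (d - 1) \<le> T" "T \<le> 1"
  shows "Gs (d - 1) \<le> hot_cycle T \<and> hot_cycle T \<le> 1"
  using hot_stroke_range[OF cold_stroke_range[OF assms]] by (simp add: hot_cycle_def)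

lemma cold_cycle_iterate_range:
  "gs 0 \<le> (cold_cycle ^^ m) (gs 0) \<and> (cold_cycle ^^ m) (gs 0) \<le> 1"
proof (induction m)
  case (Suc m)
  then show ?case
    using cold_cycle_range[OF Suc.IH[THEN conjunct1] Suc.IH[THEN conjunct2]] by simp
qed (simp add: gs0_lt_1 less_imp_le)

lemma hot_cycle_iterate_range:
  "Gs (d - 1) \<le> (hot_cycle ^^ m) (Gs (d - 1)) \<and> (hot_cycle ^^ m) (Gs (d - 1)) \<le> 1"
proof (induction m)
  case (Suc m)
  then show ?case
    using hot_cycle_range[OF Suc.IH[THEN conjunct1] Suc.IH[THEN conjunct2]] by simp
qed (use Gs_top_lt_1 in simp)

lemma cold_cycle_chain_ends_even:
  "reweight d gs 0 ((cold_cycle ^^ m) (gs 0)) \<in> chain_ends d gs Gs (2 * m)"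
proof (induction m)
  case 0
  show ?case
    using reweight_self[OF prob_vec_gs d_pos gs0_lt_1] by simp
next
  case (Suc m)
  define t where "t = (cold_cycle ^^ m) (gs 0)"
  have t: "gs 0 \<le> t" "t \<le> 1"
    using cold_cycle_iterate_range[of m] by (simp_all add: t_def)
  have "reweight d Gs (d - 1) (hot_stroke t) \<in> chain_ends d gs Gs (Suc (2 * m))"
    using Suc.IH hot_stroke_thermomaj[OF t] by (auto simp: t_def)
  then have "reweight d gs 0 (cold_cycle t) \<in> chain_ends d gs Gs (Suc (Suc (2 * m)))"
    using cold_stroke_thermomaj[OF hot_stroke_range[OF t]] by (auto simp: cold_cycle_def)
  then show ?case
    by (simp add: t_def)
qed

lemma hot_cycle_chain_ends_even:
  "reweight d Gs (d - 1) ((hot_cycle ^^ m) (Gs (d - 1))) \<in> chain_ends d Gs gs (2 * m)"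
proof (induction m)
  case 0
  show ?case
    using reweight_self[OF prob_vec_Gs top_lt Gs_top_lt_1] by simp
next
  case (Suc m)
  define T where "T = (hot_cycle ^^ m) (Gs (d - 1))"
  have T: "Gs (d - 1) \<le> T" "T \<le> 1"
    using hot_cycle_iterate_range[of m] by (simp_all add: T_def)
  have "reweight d gs 0 (cold_stroke T) \<in> chain_ends d Gs gs (Suc (2 * m))"
    using Suc.IH cold_stroke_thermomaj[OF T] by (auto simp: T_def)
  then have "reweight d Gs (d - 1) (hot_cycle T) \<in> chain_ends d Gs gs (Suc (Suc (2 * m)))"
    using hot_stroke_thermomaj[OF cold_stroke_range[OF T]] by (auto simp: hot_cycle_def)
  then show ?case
    by (simp add: T_def)
qed

(* For odd n the chain idles during its last stroke, thermomajorisation being reflexive. *)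
lemma cold_cycle_chain_ends:
  "reweight d gs 0 ((cold_cycle ^^ (n div 2)) (gs 0)) \<in> chain_ends d gs Gs n"
proof (cases "even n")
  case False
  define t where "t = (cold_cycle ^^ (n div 2)) (gs 0)"
  have t: "gs 0 \<le> t" "t \<le> 1"
    using cold_cycle_iterate_range by (simp_all add: t_def)
  have "thermomaj d Gs (reweight d gs 0 t) (reweight d gs 0 t)"
    by (rule thermomaj_refl[OF full_support_Gs prob_vec_reweight_gs[OF t]
          reweight_gs_order_Gs[OF t]])
  then have "reweight d gs 0 t \<in> chain_ends d gs Gs (Suc (2 * (n div 2)))"
    using cold_cycle_chain_ends_even[of "n div 2"] by (auto simp: t_def)
  moreover have "n = Suc (2 * (n div 2))"
    using False by simp
  ultimately show ?thesis
    by (simp add: t_def)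
qed (use cold_cycle_chain_ends_even[of "n div 2"] in simp)

lemma hot_cycle_chain_ends:
  "reweight d Gs (d - 1) ((hot_cycle ^^ (n div 2)) (Gs (d - 1))) \<in> chain_ends d Gs gs n"
proof (cases "even n")
  case False
  define T where "T = (hot_cycle ^^ (n div 2)) (Gs (d - 1))"
  have T: "Gs (d - 1) \<le> T" "T \<le> 1"
    using hot_cycle_iterate_range by (simp_all add: T_def)
  have "thermomaj d gs (reweight d Gs (d - 1) T) (reweight d Gs (d - 1) T)"
    by (rule thermomaj_refl[OF full_support_gs prob_vec_reweight_Gs[OF T]
          reweight_Gs_order_gs[OF T]])
  then have "reweight d Gs (d - 1) T \<in> chain_ends d Gs gs (Suc (2 * (n div 2)))"
    using hot_cycle_chain_ends_even[of "n div 2"] by (auto simp: T_def)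
  moreover have "n = Suc (2 * (n div 2))"
    using False by simp
  ultimately show ?thesis
    by (simp add: T_def)
qed (use hot_cycle_chain_ends_even[of "n div 2"] in simp)

definition cycle_rate :: real where
  "cycle_rate = (1 - gs 0) / (1 - gs (d - 1)) * (Gs (d - 1) / Gs 0)"

definition limit_denominator :: real where
  "limit_denominator = Gs 0 * (1 - gs (d - 1)) - Gs (d - 1) * (1 - gs 0)"

definition cold_limit :: real where
  "cold_limit = Gs 0 * (gs 0 - gs (d - 1)) / limit_denominator"

definition hot_limit :: real where
  "hot_limit = Gs (d - 1) * (gs 0 - gs (d - 1)) / limit_denominator"

lemma tilde_gamma_eq: "tilde_gamma d gs Gs = reweight d gs 0 cold_limit"
  by (simp add: tilde_gamma_def reweight_def cold_limit_def limit_denominator_def fun_eq_iff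
      Let_def)

lemma tilde_Gamma_eq: "tilde_Gamma d gs Gs = reweight d Gs (d - 1) hot_limit"
  by (simp add: tilde_Gamma_def reweight_def hot_limit_def limit_denominator_def fun_eq_iff
      Let_def)

lemma limit_denominator_pos: "0 < limit_denominator"
proof -
  have "Gs (d - 1) * (1 - gs 0) < Gs (d - 1) * (1 - gs (d - 1))"
    using Gs_pos[OF top_lt] gs_top_lt_gs0 by simp
  also have "\<dots> \<le> Gs 0 * (1 - gs (d - 1))"
    using Gs_top_le_Gs0 gs_top_lt_gs0 gs0_lt_1 by (intro mult_right_mono) auto
  finally show ?thesis
    by (simp add: limit_denominator_def)
qed

lemma hot_stroke_cold_limit: "hot_stroke cold_limit = hot_limit"
  using Gs_pos[OF d_pos] by (simp add: hot_stroke_def cold_limit_def hot_limit_def)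

lemma cold_stroke_hot_limit: "cold_stroke hot_limit = cold_limit"
  using limit_denominator_pos gs_top_lt_gs0 gs0_lt_1
  by (simp add: cold_stroke_def cold_limit_def hot_limit_def field_simps)
    (simp add: limit_denominator_def algebra_simps)

lemma cycle_rate_bounds: "0 < cycle_rate" "cycle_rate < 1"
proof -
  have k: "0 < (1 - gs 0) / (1 - gs (d - 1))" "(1 - gs 0) / (1 - gs (d - 1)) < 1"
    using gs_top_lt_gs0 gs0_lt_1 by auto
  have G: "0 < Gs (d - 1) / Gs 0" "Gs (d - 1) / Gs 0 \<le> 1"
    using Gs_pos[OF d_pos] Gs_pos[OF top_lt] Gs_top_le_Gs0 by auto
  show "0 < cycle_rate"
    unfolding cycle_rate_def by (rule mult_pos_pos[OF k(1) G(1)])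
  show "cycle_rate < 1"
    using mult_strict_right_mono[OF k(2) G(1)] G(2) by (simp add: cycle_rate_def)
qed

lemma hot_stroke_diff: "hot_stroke a - hot_stroke b = Gs (d - 1) / Gs 0 * (a - b)"
  by (simp add: hot_stroke_def diff_divide_distrib algebra_simps)

lemma cold_stroke_diff: "cold_stroke a - cold_stroke b = (1 - gs 0) / (1 - gs (d - 1)) * (a - b)"
  by (simp add: cold_stroke_def algebra_simps add_divide_distrib[symmetric])

lemma cold_cycle_contracts: "cold_cycle t - cold_limit = cycle_rate * (t - cold_limit)"
proof -
  have "cold_cycle t - cold_limit =
      cold_stroke (hot_stroke t) - cold_stroke (hot_stroke cold_limit)"
    by (simp add: cold_cycle_def hot_stroke_cold_limit cold_stroke_hot_limit)
  also have "\<dots> = cycle_rate * (t - cold_limit)"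
    unfolding cold_stroke_diff hot_stroke_diff cycle_rate_def by (simp only: mult_ac)
  finally show ?thesis .
qed

lemma hot_cycle_contracts: "hot_cycle T - hot_limit = cycle_rate * (T - hot_limit)"
proof -
  have "hot_cycle T - hot_limit =
      hot_stroke (cold_stroke T) - hot_stroke (cold_stroke hot_limit)"
    by (simp add: hot_cycle_def hot_stroke_cold_limit cold_stroke_hot_limit)
  also have "\<dots> = cycle_rate * (T - hot_limit)"
    unfolding cold_stroke_diff hot_stroke_diff cycle_rate_def by (simp only: mult_ac)
  finally show ?thesis .
qed

lemma tilde_gamma_exponential_bound:
  "\<exists>C r. 0 < r \<and> r < 1 \<and>
     (\<forall>N\<ge>1. \<exists>q\<in>F_N d gs Gs N. vdist d q (tilde_gamma d gs Gs) \<le> C * r ^ N)"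
proof (rule F_N_exponential_bound[OF cycle_rate_bounds, of "2 * \<bar>gs 0 - cold_limit\<bar>"])
  fix n
  show "reweight d gs 0 ((cold_cycle ^^ (n div 2)) (gs 0))
      \<in> chain_ends d gs Gs n \<union> chain_ends d Gs gs n"
    using cold_cycle_chain_ends by simp
  show "vdist d (reweight d gs 0 ((cold_cycle ^^ (n div 2)) (gs 0))) (tilde_gamma d gs Gs)
      \<le> 2 * \<bar>gs 0 - cold_limit\<bar> * cycle_rate ^ (n div 2)"
    unfolding tilde_gamma_eq vdist_reweight[OF prob_vec_gs d_pos gs0_lt_1]
    using funpow_affine_contraction[OF cold_cycle_contracts, of "n div 2" "gs 0"]
      cycle_rate_bounds
    by (simp add: abs_mult)
qed simp

lemma tilde_Gamma_exponential_bound: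
  "\<exists>C r. 0 < r \<and> r < 1 \<and>
     (\<forall>N\<ge>1. \<exists>q\<in>F_N d gs Gs N. vdist d q (tilde_Gamma d gs Gs) \<le> C * r ^ N)"
proof (rule F_N_exponential_bound[OF cycle_rate_bounds, of "2 * \<bar>Gs (d - 1) - hot_limit\<bar>"])
  fix n
  show "reweight d Gs (d - 1) ((hot_cycle ^^ (n div 2)) (Gs (d - 1)))
      \<in> chain_ends d gs Gs n \<union> chain_ends d Gs gs n"
    using hot_cycle_chain_ends by simp
  show "vdist d (reweight d Gs (d - 1) ((hot_cycle ^^ (n div 2)) (Gs (d - 1))))
      (tilde_Gamma d gs Gs) \<le> 2 * \<bar>Gs (d - 1) - hot_limit\<bar> * cycle_rate ^ (n div 2)"
    unfolding tilde_Gamma_eq vdist_reweight[OF prob_vec_Gs top_lt Gs_top_lt_1]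
    using funpow_affine_contraction[OF hot_cycle_contracts, of "n div 2" "Gs (d - 1)"]
      cycle_rate_bounds
    by (simp add: abs_mult)
qed simp

end

theorem proposition4:
  fixes d :: nat and E :: "nat \<Rightarrow> real" and \<alpha> \<beta> :: real
  assumes "d \<ge> 2"
    and "\<forall>i j. i \<le> j \<longrightarrow> j < d \<longrightarrow> E i \<le> E j"
    and "E 0 < E (d - 1)"
    and "\<alpha> > \<beta>" and "\<beta> \<ge> 0"
  defines "gs \<equiv> gibbs d E \<alpha>" and "Gs \<equiv> gibbs d E \<beta>"
  shows "tilde_gamma d gs Gs \<in> F_AB d gs Gs \<and> tilde_Gamma d gs Gs \<in> F_AB d gs Gs \<and>
    (\<exists>C r. 0 < r \<and> r < 1 \<and> (\<forall>N\<ge>1. \<exists>q\<in>F_N d gs Gs N.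
        vdist d q (tilde_gamma d gs Gs) \<le> C * r ^ N)) \<and>
    (\<exists>C r. 0 < r \<and> r < 1 \<and> (\<forall>N\<ge>1. \<exists>q\<in>F_N d gs Gs N.
        vdist d q (tilde_Gamma d gs Gs) \<le> C * r ^ N))"
proof -
  interpret two_baths d E \<alpha> \<beta>
    using assms(1-5) by unfold_locales
  have "\<forall>i\<ge>d. tilde_gamma d gs Gs i = 0" "\<forall>i\<ge>d. tilde_Gamma d gs Gs i = 0"
    using d_pos by (auto simp: gs_def Gs_def tilde_gamma_eq tilde_Gamma_eq reweight_def)
  then show ?thesis
    unfolding gs_def Gs_def
    using F_AB_if_exponential_bound tilde_gamma_exponential_bound tilde_Gamma_exponential_bound
    by blast
qed

end
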